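(* In a public goods economy (as in the context), if an outcome $\mathbf{a}$ is in the core, then the set $\mathbf{D}_{\mathbf{a}}=\{\mathbf{a}'\in[0,1]^n:\mathbf{u}(\mathbf{a})\ge\mathbf{u}(\mathbf{a}')\}$ is path connected.
   Context: Agents $N=\{1,\dots,n\}$; outcomes are vectors in $[0,1]^n$. Vector orderings: $\mathbf{x}\ge\mathbf{y}$ coordinatewise; $\mathbf{x}>\mathbf{y}$ strict in every coordinate; $\mathbf{x}\gneq\mathbf{y}$ means $\mathbf{x}\ge\mathbf{y}$ and $x_j>y_j$ for some $j$. For $C\subseteq N$, $\mathbf{v}_C$ is the restriction of $\mathbf{v}$ to coordinates in $C$. The utility function $\mathbf{u}:[0,1]^n\to[0,1]^n$ is continuous, concave, and has positive externalities: whenever $\mathbf{a}\gneq\mathbf{a}'$ and $a_i=a'_i$, then $u_i(\mathbf{a})>u_i(\mathbf{a}')$. A coalition is a nonempty $C\subseteq N$; $\mathbf{a}'$ is a deviation from $\mathbf{a}$ for $C$ if $\mathbf{a}'_{N\setminus C}=\mathbf{0}$ and $\mathbf{u}_C(\mathbf{a}')>\mathbf{u}_C(\mathbf{a})$. The core is the set of outcomes from which no coalition has a deviation. Path connected: any two points of the set are joined by a continuous path $f:[0,1]\to[0,1]^n$ lying in the set. *)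

theory Defs
  imports "HOL-Analysis.Analysis"
begin

text \<open>Agents are the elements of the finite index type 'n; outcomes are vectors in [0,1]^n.\<close>

definition unit_cube :: "(real ^ 'n) set" where
  "unit_cube = {x. \<forall>i. 0 \<le> x $ i \<and> x $ i \<le> 1}"

definition vec_gneq :: "real ^ 'n \<Rightarrow> real ^ 'n \<Rightarrow> bool" where
  "vec_gneq a b \<longleftrightarrow> (\<forall>i. b $ i \<le> a $ i) \<and> (\<exists>j. b $ j < a $ j)"

definition public_goods_utility :: "(real ^ 'n \<Rightarrow> real ^ 'n) \<Rightarrow> bool" where
  "public_goods_utility u \<longleftrightarrow>
     u ` unit_cube \<subseteq> unit_cube \<and>
     continuous_on unit_cube u \<and>
     (\<forall>i. concave_on unit_cube (\<lambda>x. u x $ i)) \<and>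
     (\<forall>a\<in>unit_cube. \<forall>a'\<in>unit_cube. \<forall>i.
        vec_gneq a a' \<and> a $ i = a' $ i \<longrightarrow> u a' $ i < u a $ i)"

definition is_deviation ::
  "(real ^ 'n \<Rightarrow> real ^ 'n) \<Rightarrow> 'n set \<Rightarrow> real ^ 'n \<Rightarrow> real ^ 'n \<Rightarrow> bool" where
  "is_deviation u C a a' \<longleftrightarrow>
     a' \<in> unit_cube \<and> (\<forall>i. i \<notin> C \<longrightarrow> a' $ i = 0) \<and> (\<forall>i\<in>C. u a $ i < u a' $ i)"

definition core :: "(real ^ 'n \<Rightarrow> real ^ 'n) \<Rightarrow> (real ^ 'n) set" where
  "core u = {a \<in> unit_cube. \<forall>C. C \<noteq> {} \<longrightarrow> \<not> (\<exists>a'. is_deviation u C a a')}"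

definition dominated_set :: "(real ^ 'n \<Rightarrow> real ^ 'n) \<Rightarrow> real ^ 'n \<Rightarrow> (real ^ 'n) set" where
  "dominated_set u a = {a' \<in> unit_cube. \<forall>i. u a' $ i \<le> u a $ i}"

end

(*
  The dominated set D is closed, bounded below by 0 and, by positive externalities, closed under
  coordinatewise minimum. For b in D, the points below b that are joined to b inside D form a
  lattice; a decreasing sequence in it converges to its infimum m, and concatenating infinitely many
  paths, each the minimum of a point of the sequence with a path from b, joins b to m. So m is the
  least point below b reachable from b.

  It remains to descend from every x /= 0 in D along a segment inside D. If a contributing agent is
  strictly worse off than at a, continuity lets her contribution drop a little. Otherwise all
  contributors S are exactly as well off as at a; as a is in the core, S cannot deviate, and a
  KKM-type argument gives for each short length t a direction on the simplex over S along which
  nobody in S ends up better off than at a by more than a small multiple of t. Concavity spreads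
  this bound along the whole segment, and a limit direction stays in D. Hence m = 0 and D is path connected through 0.
*)

theory Submission
  imports Defs
begin

section \<open>Limits of chains of paths\<close>

text \<open>When the pieces shrink towards \<open>m\<close> these paths converge uniformly, and the limit is a
  path ending at \<open>m\<close>.\<close>

primrec concat_paths :: "(nat \<Rightarrow> real \<Rightarrow> 'a::real_normed_vector) \<Rightarrow> nat \<Rightarrow> nat \<Rightarrow> real \<Rightarrow> 'a" where
  "concat_paths g 0 j = (\<lambda>t. pathstart (g j))"
| "concat_paths g (Suc k) j = g j +++ concat_paths g k (Suc j)"

lemma path_concat_paths:
  assumes "\<And>k. path (g k)" "\<And>k. pathfinish (g k) = pathstart (g (Suc k))"
    and "\<And>k. path_image (g k) \<subseteq> T" "\<And>k. path_image (g k) \<subseteq> cball m (r k)" "decseq r"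
  shows "path (concat_paths g k j) \<and> pathstart (concat_paths g k j) = pathstart (g j)
    \<and> pathfinish (concat_paths g k j) = pathstart (g (j + k))
    \<and> path_image (concat_paths g k j) \<subseteq> T \<inter> cball m (r j)"
proof (induction k arbitrary: j)
  case 0
  have "pathstart (g j) \<in> T \<inter> cball m (r j)"
    using assms(3,4) pathstart_in_path_image by blast
  then show ?case by (auto simp: path_def pathstart_def pathfinish_def path_image_def)
next
  case (Suc k)
  have "cball m (r (Suc j)) \<subseteq> cball m (r j)"
    using \<open>decseq r\<close> by (simp add: decseq_SucD subset_cball)
  then show ?case using Suc[of "Suc j"] assms(1-4)[of j] by (auto simp: path_image_join)
qed

lemma dist_concat_paths:
  assumes "\<And>k. path (g k)" "\<And>k. pathfinish (g k) = pathstart (g (Suc k))"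
    and "\<And>k. path_image (g k) \<subseteq> cball m (r k)" "decseq r"
    and "k \<le> k'" "t \<in> {0..1}"
  shows "dist (concat_paths g k j t) (concat_paths g k' j t) \<le> 2 * r (j + k)"
  using assms(5,6)
proof (induction k arbitrary: k' j t)
  case 0
  have "path_image (concat_paths g k' j) \<subseteq> cball m (r j)"
    using path_concat_paths[OF assms(1,2) _ assms(3,4), where T=UNIV] by simp
  then have "concat_paths g k' j t \<in> cball m (r j)"
    using 0 by (auto simp: path_image_def image_subset_iff)
  moreover have "pathstart (g j) \<in> cball m (r j)"
    using assms(3) pathstart_in_path_image by blast
  ultimately show ?case
    using dist_triangle3[of "pathstart (g j)" "concat_paths g k' j t" m] by simp
next
  case (Suc k)
  then obtain k1 where k1: "k' = Suc k1" "k \<le> k1" by (metis Suc_le_D Suc_le_mono)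
  have r_nonneg: "0 \<le> r n" for n
  proof -
    have "pathstart (g n) \<in> cball m (r n)"
      using assms(3) pathstart_in_path_image by blast
    then show ?thesis by (metis mem_cball zero_le_dist order_trans)
  qed
  show ?case
  proof (cases "t \<le> 1/2")
    case True
    then show ?thesis using k1 r_nonneg by (simp add: joinpaths_def)
  next
    case False
    then have "2 * t - 1 \<in> {0..1}" using Suc.prems by auto
    then show ?thesis using Suc.IH[of k1 "2 * t - 1" "Suc j"] k1 False by (simp add: joinpaths_def)
  qed
qed

lemma path_component_limit_of_path_chain:
  fixes g :: "nat \<Rightarrow> real \<Rightarrow> 'a::banach"
  assumes "closed T"
    and path: "\<And>k. path (g k)" and join: "\<And>k. pathfinish (g k) = pathstart (g (Suc k))"
    and in_T: "\<And>k. path_image (g k) \<subseteq> T"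
    and near: "\<And>k. path_image (g k) \<subseteq> cball m (r k)" and "decseq r" and "r \<longlonglongrightarrow> 0"
  shows "path_component T (pathstart (g 0)) m"
proof -
  define Q where "Q k = concat_paths g k 0" for k
  note Q_props = path_concat_paths[OF path join in_T near \<open>decseq r\<close>, of _ 0, folded Q_def]
  have "uniformly_Cauchy_on {0..1} Q"
  proof (rule uniformly_Cauchy_onI)
    fix e :: real assume "e > 0"
    then obtain M where M: "\<And>n. n \<ge> M \<Longrightarrow> \<bar>r n\<bar> < e / 2"
      using \<open>r \<longlonglongrightarrow> 0\<close> half_gt_zero unfolding LIMSEQ_iff by fastforce
    have "dist (Q p t) (Q q t) < e" if "t \<in> {0..1}" "M \<le> p" "p \<le> q" for p q t
      using dist_concat_paths[OF path join near \<open>decseq r\<close> \<open>p \<le> q\<close> \<open>t \<in> {0..1}\<close>, of 0]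
        M[OF \<open>M \<le> p\<close>] by (simp add: Q_def)
    then show "\<exists>M. \<forall>t\<in>{0..1}. \<forall>p\<ge>M. \<forall>q\<ge>M. dist (Q p t) (Q q t) < e"
      by (metis dist_commute nle_le)
  qed
  then obtain P where P: "uniform_limit {0..1} Q P sequentially"
    using uniformly_convergent_eq_Cauchy unfolding uniformly_convergent_on_def by blast
  have "continuous_on {0..1} P"
    by (rule uniform_limit_theorem[OF _ P]) (use Q_props in \<open>simp_all add: path_def\<close>)
  moreover have lim: "(\<lambda>k. Q k t) \<longlonglongrightarrow> P t" if "t \<in> {0..1}" for t
    using tendsto_uniform_limitI[OF P that] .
  moreover have "P t \<in> T" if "t \<in> {0..1}" for t
  proof (rule Lim_in_closed_set[OF \<open>closed T\<close> _ _ lim[OF that]])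
    show "\<forall>\<^sub>F k in sequentially. Q k t \<in> T"
      using Q_props that by (auto simp: path_image_def image_subset_iff)
  qed simp
  moreover have "P 0 = pathstart (g 0)"
    using lim[of 0] Q_props by (simp add: pathstart_def LIMSEQ_const_iff)
  moreover have "P 1 = m"
  proof -
    have "dist (Q k 1) m \<le> dist (r k) 0" for k
      using near[of k] pathstart_in_path_image[of "g k"] Q_props[of k]
      by (force simp: pathfinish_def dist_commute)
    then have "(\<lambda>k. Q k 1) \<longlonglongrightarrow> m"
      by (intro metric_tendsto_imp_tendsto[OF \<open>r \<longlonglongrightarrow> 0\<close>] always_eventually) simp
    then show ?thesis using LIMSEQ_unique lim[of 1] by auto
  qed
  ultimately show ?thesis
    unfolding path_component_def path_def path_image_def pathstart_def pathfinish_def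
    by (intro exI[of _ P]) auto
qed

section \<open>Sets closed under infima\<close>

lemma norm_diff_le_of_between:
  fixes m v w :: "'a::ordered_euclidean_space"
  assumes "m \<le> v" "v \<le> w"
  shows "norm (v - m) \<le> norm (w - m)"
proof (rule norm_le_componentwise)
  fix b :: 'a assume "b \<in> Basis"
  then show "\<bar>(v - m) \<bullet> b\<bar> \<le> \<bar>(w - m) \<bullet> b\<bar>"
    using assms by (auto simp: eucl_le[where 'a='a] inner_diff_left)
qed

lemma continuous_on_inf_left:
  fixes c :: "'a::ordered_euclidean_space"
  shows "continuous_on S (inf c)"
  unfolding continuous_on_def by (intro ballI tendsto_inf tendsto_const tendsto_ident_at)

lemma path_component_inf:
  fixes T :: "'a::ordered_euclidean_space set"
  assumes "path_component T p q" "c \<in> T" "\<And>x y. x \<in> T \<Longrightarrow> y \<in> T \<Longrightarrow> inf x y \<in> T"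
  shows "path_component T (inf c p) (inf c q)"
proof -
  obtain g where g: "path g" "path_image g \<subseteq> T" "pathstart g = p" "pathfinish g = q"
    using assms(1) unfolding path_component_def by blast
  have "path (inf c \<circ> g)"
    using g(1) continuous_on_inf_left by (rule path_continuous_image)
  moreover have "path_image (inf c \<circ> g) \<subseteq> T"
    using g(2) assms(2,3) by (auto simp: path_image_def)
  ultimately show ?thesis
    unfolding path_component_def using g(3,4)
    by (intro exI[of _ "inf c \<circ> g"]) (simp add: pathstart_def pathfinish_def)
qed

lemma inf_closed_near_Inf_on_Basis:
  fixes K :: "'a::ordered_euclidean_space set"
  assumes "K \<noteq> {}" and inf_closed: "\<And>x y. x \<in> K \<Longrightarrow> y \<in> K \<Longrightarrow> inf x y \<in> K"
    and "0 < d" "B \<subseteq> Basis"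
  shows "\<exists>c\<in>K. \<forall>i\<in>B. c \<bullet> i < Inf K \<bullet> i + d"
proof -
  have "finite B" using \<open>B \<subseteq> Basis\<close> finite_Basis by (rule finite_subset)
  then show ?thesis using \<open>B \<subseteq> Basis\<close>
  proof (induction B rule: finite_induct)
    case empty
    then show ?case using \<open>K \<noteq> {}\<close> by blast
  next
    case (insert i B)
    have "B \<subseteq> Basis" using insert.prems by simp
    then obtain c where c: "c \<in> K" "\<forall>j\<in>B. c \<bullet> j < Inf K \<bullet> j + d"
      using insert.IH by blast
    have "i \<in> Basis" using insert.prems by simp
    have "(INF x\<in>K. x \<bullet> i) < Inf K \<bullet> i + d"
      using inner_Basis_INF_left[OF \<open>i \<in> Basis\<close>, of id K] \<open>0 < d\<close> by simp
    then obtain y where y: "y \<in> K" "y \<bullet> i < Inf K \<bullet> i + d"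
      using cInf_lessD[of "(\<lambda>x. x \<bullet> i) ` K"] \<open>K \<noteq> {}\<close> by blast
    have "inf c y \<bullet> j < Inf K \<bullet> j + d" if "j \<in> insert i B" for j
      using that c(2) y(2) insert.prems inner_Basis_inf_left[of j c y]
      by (auto simp: inf_min min_less_iff_disj)
    then show ?case using inf_closed[OF c(1) y(1)] by blast
  qed
qed

lemma Inf_in_closure_of_inf_closed:
  fixes K :: "'a::ordered_euclidean_space set"
  assumes "K \<noteq> {}" "bdd_below K" and inf_closed: "\<And>x y. x \<in> K \<Longrightarrow> y \<in> K \<Longrightarrow> inf x y \<in> K"
  shows "Inf K \<in> closure K"
proof (rule closure_approachable[THEN iffD2], intro allI impI)
  fix e :: real assume "0 < e"
  define d where "d = e / real DIM('a)"
  have "0 < d" using \<open>0 < e\<close> by (simp add: d_def)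
  then obtain c where c: "c \<in> K" "\<And>i. i \<in> Basis \<Longrightarrow> c \<bullet> i < Inf K \<bullet> i + d"
    using inf_closed_near_Inf_on_Basis[OF \<open>K \<noteq> {}\<close> inf_closed, of d Basis] by blast
  have "Inf K \<le> c" using c(1) \<open>bdd_below K\<close> by (rule cInf_lower)
  then have "0 \<le> (c - Inf K) \<bullet> i" if "i \<in> Basis" for i
    using that by (simp add: eucl_le[where 'a='a] inner_diff_left)
  then have "dist c (Inf K) \<le> (\<Sum>i\<in>Basis. (c - Inf K) \<bullet> i)"
    using norm_le_l1[of "c - Inf K"] by (simp add: dist_norm)
  also have "\<dots> < (\<Sum>i\<in>(Basis::'a set). d)"
  proof (rule sum_strict_mono)
    show "(c - Inf K) \<bullet> i < d" if "i \<in> Basis" for i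
      using c(2)[OF that] by (simp add: inner_diff_left)
  qed simp_all
  also have "\<dots> = e" by (simp add: d_def)
  finally show "\<exists>c\<in>K. dist c (Inf K) < e" using c(1) by blast
qed

lemma inf_closed_decseq_tendsto_Inf:
  fixes K :: "'a::ordered_euclidean_space set"
  assumes "K \<noteq> {}" "bdd_below K" and inf_closed: "\<And>x y. x \<in> K \<Longrightarrow> y \<in> K \<Longrightarrow> inf x y \<in> K"
  obtains z where "\<And>k. z k \<in> K" "decseq z" "z \<longlonglongrightarrow> Inf K"
proof -
  obtain c where c: "\<And>k. c k \<in> K" "c \<longlonglongrightarrow> Inf K"
    using Inf_in_closure_of_inf_closed[OF assms] closure_sequential by blast
  define z where "z = rec_nat (c 0) (\<lambda>k zk. inf zk (c (Suc k)))"
  have z_simps: "z 0 = c 0" "z (Suc k) = inf (z k) (c (Suc k))" for k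
    by (simp_all add: z_def)
  have z_in_K: "z k \<in> K" for k
    by (induction k) (simp_all add: z_simps c(1) inf_closed)
  have "decseq z"
    by (rule decseq_SucI) (simp add: z_simps)
  have "dist (z k) (Inf K) \<le> dist (c k) (Inf K)" for k
  proof -
    have "z k \<le> c k" by (cases k) (simp_all add: z_simps)
    moreover have "Inf K \<le> z k" using z_in_K \<open>bdd_below K\<close> by (rule cInf_lower)
    ultimately show ?thesis by (simp add: dist_norm norm_diff_le_of_between)
  qed
  then have "z \<longlonglongrightarrow> Inf K"
    by (intro metric_tendsto_imp_tendsto[OF c(2)] always_eventually) simp
  then show thesis using that z_in_K \<open>decseq z\<close> by blast
qed

lemma inf_path_component_below:
  fixes T :: "'a::ordered_euclidean_space set"
  assumes inf_closed: "\<And>x y. x \<in> T \<Longrightarrow> y \<in> T \<Longrightarrow> inf x y \<in> T"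
    and "c \<le> b" "path_component T b c" "path_component T b v"
  shows "inf c v \<le> b \<and> path_component T b (inf c v)"
proof -
  have "path_component T (inf c b) (inf c v)"
    using path_component_inf[OF assms(4) path_component_mem(2)[OF assms(3)] inf_closed] .
  then have "path_component T c (inf c v)"
    using \<open>c \<le> b\<close> by (simp add: inf_absorb1)
  then show ?thesis
    using assms(2,3) path_component_trans le_infI1 by blast
qed

text \<open>The paths joining the \<open>z k\<close> are minima of \<open>z k\<close> with paths from \<open>b\<close>, so they stay between the
  lower bound \<open>m\<close> and \<open>z k\<close> and shrink towards \<open>m\<close>.\<close>

lemma path_component_lim_decseq_below:
  fixes T :: "'a::ordered_euclidean_space set"
  assumes "closed T" and inf_closed: "\<And>x y. x \<in> T \<Longrightarrow> y \<in> T \<Longrightarrow> inf x y \<in> T"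
    and "decseq z" "z \<longlonglongrightarrow> m" and z: "\<And>k. z k \<le> b" "\<And>k. path_component T b (z k)"
    and lower: "\<And>v. v \<le> b \<Longrightarrow> path_component T b v \<Longrightarrow> m \<le> v"
  shows "path_component T b m"
proof -
  have z_Suc: "z (Suc k) \<le> z k" for k using \<open>decseq z\<close> by (simp add: decseq_SucD)
  have "\<forall>k. \<exists>\<gamma>. path \<gamma> \<and> path_image \<gamma> \<subseteq> T \<and> pathstart \<gamma> = b \<and> pathfinish \<gamma> = z (Suc k)"
    using z(2) by (simp add: path_component_def)
  then obtain \<Gamma> where \<Gamma>: "\<And>k. path (\<Gamma> k)" "\<And>k. path_image (\<Gamma> k) \<subseteq> T"
    "\<And>k. pathstart (\<Gamma> k) = b" "\<And>k. pathfinish (\<Gamma> k) = z (Suc k)"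
    by metis
  define g where "g k = inf (z k) \<circ> \<Gamma> k" for k
  define r where "r k = norm (z k - m)" for k
  have g_start: "pathstart (g k) = z k" for k
    using z(1)[of k] \<Gamma>(3) by (simp add: g_def pathstart_def inf_absorb1)
  have g_image: "m \<le> v \<and> v \<le> z k \<and> v \<in> T" if "v \<in> path_image (g k)" for k v
  proof -
    obtain t where t: "t \<in> {0..1}" "v = inf (z k) (\<Gamma> k t)"
      using \<open>v \<in> path_image (g k)\<close> by (auto simp: g_def path_image_def)
    have "path_component (path_image (\<Gamma> k)) b (\<Gamma> k t)"
      using path_component_path_image_pathstart[OF \<Gamma>(1)] \<Gamma>(3) t(1) by (auto simp: path_image_def)
    then have "path_component T b (\<Gamma> k t)"
      by (rule path_component_of_subset[OF \<Gamma>(2)])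
    then have "v \<le> b" "path_component T b v"
      using inf_path_component_below[OF inf_closed z(1) z(2)] t(2) by auto
    then have "m \<le> v" "v \<in> T" using lower path_component_mem(2) by blast+
    moreover have "v \<le> z k" using t(2) by simp
    ultimately show ?thesis by blast
  qed
  have "path_component T (pathstart (g 0)) m"
  proof (rule path_component_limit_of_path_chain[where g = g and r = r, OF \<open>closed T\<close>])
    show "path (g k)" for k
      unfolding g_def using \<Gamma>(1) continuous_on_inf_left by (rule path_continuous_image)
    show "pathfinish (g k) = pathstart (g (Suc k))" for k
      using z_Suc[of k] \<Gamma>(4) g_start by (simp add: g_def pathfinish_def inf_absorb2)
    show "path_image (g k) \<subseteq> T" for k using g_image by blast
    show "path_image (g k) \<subseteq> cball m (r k)" for k
    proof
      fix v assume "v \<in> path_image (g k)"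
      then have "m \<le> v" "v \<le> z k" using g_image by auto
      then show "v \<in> cball m (r k)"
        by (simp add: r_def dist_norm norm_minus_commute[of m] norm_diff_le_of_between)
    qed
    have "m \<le> z k" for k using lower z by blast
    then show "decseq r"
      using z_Suc by (intro decseq_SucI) (simp add: r_def norm_diff_le_of_between)
    show "r \<longlonglongrightarrow> 0"
      using \<open>z \<longlonglongrightarrow> m\<close> unfolding r_def by (simp add: tendsto_norm_zero LIM_zero)
  qed
  then show ?thesis
    using z(2)[of 0] g_start path_component_trans by auto
qed

lemma Inf_path_component_below:
  fixes T :: "'a::ordered_euclidean_space set"
  assumes "closed T" "bdd_below T" and inf_closed: "\<And>x y. x \<in> T \<Longrightarrow> y \<in> T \<Longrightarrow> inf x y \<in> T"
    and "b \<in> T"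
  defines "K \<equiv> {y. y \<le> b \<and> path_component T b y}"
  shows "Inf K \<in> K"
proof -
  have "b \<in> K" using \<open>b \<in> T\<close> by (simp add: K_def path_component_refl)
  have "bdd_below K"
    using \<open>bdd_below T\<close> by (rule bdd_below_mono) (auto simp: K_def dest: path_component_mem(2))
  have "inf x y \<in> K" if "x \<in> K" "y \<in> K" for x y
    using inf_path_component_below[OF inf_closed] that by (simp add: K_def)
  then obtain z where z: "\<And>k. z k \<in> K" "decseq z" "z \<longlonglongrightarrow> Inf K"
    using inf_closed_decseq_tendsto_Inf[OF _ \<open>bdd_below K\<close>] \<open>b \<in> K\<close> by blast
  have "Inf K \<le> v" if "v \<in> K" for v using that \<open>bdd_below K\<close> by (rule cInf_lower)
  then have "path_component T b (Inf K)" and "Inf K \<le> b"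
    using path_component_lim_decseq_below[OF \<open>closed T\<close> inf_closed z(2,3)] z(1) \<open>b \<in> K\<close>
    by (auto simp: K_def)
  then show ?thesis by (simp add: K_def)
qed

lemma path_connected_inf_closed_descending:
  fixes T :: "'a::ordered_euclidean_space set"
  assumes "closed T" "bdd_below T" and inf_closed: "\<And>x y. x \<in> T \<Longrightarrow> y \<in> T \<Longrightarrow> inf x y \<in> T"
    and descend: "\<And>x. x \<in> T \<Longrightarrow> x \<noteq> c \<Longrightarrow> \<exists>z<x. path_component T x z"
  shows "path_connected T"
proof -
  have "path_component T b c" if "b \<in> T" for b
  proof -
    define K where "K = {y. y \<le> b \<and> path_component T b y}"
    have m: "Inf K \<in> K"
      unfolding K_def using Inf_path_component_below[OF assms(1-3) that] .
    have "Inf K = c"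
    proof (rule ccontr)
      assume "Inf K \<noteq> c"
      moreover have "Inf K \<in> T" using m by (auto simp: K_def dest: path_component_mem(2))
      ultimately obtain z where "z < Inf K" "path_component T (Inf K) z"
        using descend by blast
      then have "z \<in> K" using m path_component_trans by (auto simp: K_def)
      moreover have "bdd_below K"
        using \<open>bdd_below T\<close> by (rule bdd_below_mono) (auto simp: K_def dest: path_component_mem(2))
      ultimately have "Inf K \<le> z" by (rule cInf_lower)
      then show False using \<open>z < Inf K\<close> by simp
    qed
    then show ?thesis using m by (simp add: K_def)
  qed
  then show ?thesis
    unfolding path_connected_component by (meson path_component_sym path_component_trans)
qed

section \<open>A KKM-type lemma on faces of the simplex\<close>

definition simplex_on :: "'n set \<Rightarrow> (real ^ 'n::finite) set" where
  "simplex_on S = {w. 0 \<le> w \<and> (\<forall>i. i \<notin> S \<longrightarrow> w $ i = 0) \<and> (\<Sum>i\<in>UNIV. w $ i) = 1}"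

lemma simplex_on_nth_le_1:
  assumes "w \<in> simplex_on S" shows "w $ i \<le> 1"
proof -
  have "w $ i \<le> (\<Sum>j\<in>UNIV. w $ j)"
    using assms by (intro member_le_sum) (auto simp: simplex_on_def less_eq_vec_def)
  then show ?thesis using assms by (simp add: simplex_on_def)
qed

lemma compact_simplex_on: "compact (simplex_on (S :: 'n::finite set))"
proof (rule compact_eq_bounded_closed[THEN iffD2], rule conjI)
  have eq: "simplex_on S = {0..} \<inter> (\<Inter>i\<in>-S. {w. w $ i = 0}) \<inter> {w. (\<Sum>i\<in>UNIV. w $ i) = 1}"
    by (auto simp: simplex_on_def)
  have "closed {w::real ^ 'n. w $ i = 0}" for i
    by (intro closed_Collect_eq continuous_intros)
  moreover have "closed {w::real ^ 'n. (\<Sum>i\<in>UNIV. w $ i) = 1}"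
    by (intro closed_Collect_eq continuous_intros)
  ultimately show "closed (simplex_on S)"
    unfolding eq by (intro closed_Int closed_INT ballI closed_eucl_atLeast)
  show "bounded (simplex_on S)"
    unfolding bounded_iff
  proof (intro exI ballI)
    fix w assume w: "w \<in> simplex_on S"
    have "norm w \<le> (\<Sum>i\<in>UNIV. \<bar>w $ i\<bar>)" by (rule norm_le_l1_cart)
    also have "\<dots> = 1" using w by (simp add: simplex_on_def less_eq_vec_def)
    finally show "norm w \<le> 1" .
  qed
qed

lemma convex_simplex_on: "convex (simplex_on (S :: 'n::finite set))"
  unfolding convex_def
proof (intro ballI allI impI)
  fix x y :: "real ^ 'n" and p q :: real
  assume x: "x \<in> simplex_on S" and y: "y \<in> simplex_on S" and pq: "0 \<le> p" "0 \<le> q" "p + q = 1"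
  have "(\<Sum>i\<in>UNIV. (p *\<^sub>R x + q *\<^sub>R y) $ i) = p * (\<Sum>i\<in>UNIV. x $ i) + q * (\<Sum>i\<in>UNIV. y $ i)"
    by (simp add: sum.distrib sum_distrib_left)
  then show "p *\<^sub>R x + q *\<^sub>R y \<in> simplex_on S"
    using x y pq by (auto simp: simplex_on_def less_eq_vec_def)
qed

lemma axis_in_simplex_on: "j \<in> S \<Longrightarrow> axis j 1 \<in> simplex_on S"
  by (auto simp: simplex_on_def axis_def less_eq_vec_def)

lemma simplex_on_nonzero: "w \<in> simplex_on S \<Longrightarrow> w \<noteq> 0"
  by (auto simp: simplex_on_def)

text \<open>A dual form of the KKM lemma. If the sets \<open>{g i < 0}\<close> had no common point, normalising the
  weights \<open>max 0 (- g i w)\<close> would give a self-map of the simplex whose Brouwer fixed point lies on a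
  facet \<open>w $ i = 0\<close> with \<open>g i w \<ge> 0\<close>.\<close>
lemma simplex_on_open_cover_common_point:
  fixes g :: "'n::finite \<Rightarrow> real ^ 'n \<Rightarrow> real"
  assumes "S \<noteq> {}"
    and cont: "\<And>i. i \<in> S \<Longrightarrow> continuous_on (simplex_on S) (g i)"
    and facet: "\<And>w i. w \<in> simplex_on S \<Longrightarrow> i \<in> S \<Longrightarrow> w $ i = 0 \<Longrightarrow> g i w < 0"
    and cover: "\<And>w. w \<in> simplex_on S \<Longrightarrow> \<exists>i\<in>S. g i w < 0"
  shows "\<exists>w\<in>simplex_on S. \<forall>i\<in>S. g i w < 0"
proof (rule ccontr)
  assume "\<not> ?thesis"
  then have uncovered: "\<And>w. w \<in> simplex_on S \<Longrightarrow> \<exists>i\<in>S. 0 \<le> g i w" by (meson not_le)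
  define \<phi> where "\<phi> i w = (if i \<in> S then max 0 (- g i w) else 0)" for i w
  have sum_pos: "0 < (\<Sum>k\<in>UNIV. \<phi> k w)" if w: "w \<in> simplex_on S" for w
  proof -
    obtain i where i: "i \<in> S" "g i w < 0" using cover[OF w] by blast
    then have "0 < \<phi> i w" by (simp add: \<phi>_def)
    also have "\<phi> i w \<le> (\<Sum>k\<in>UNIV. \<phi> k w)"
      by (intro member_le_sum) (auto simp: \<phi>_def)
    finally show ?thesis .
  qed
  define f where "f w = (\<chi> i. \<phi> i w / (\<Sum>k\<in>UNIV. \<phi> k w))" for w
  have "continuous_on (simplex_on S) (\<phi> i)" for i
    unfolding \<phi>_def[abs_def] by (cases "i \<in> S") (auto intro!: continuous_intros cont)
  moreover have "\<forall>w\<in>simplex_on S. (\<Sum>k\<in>UNIV. \<phi> k w) \<noteq> 0"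
    using sum_pos by (metis less_irrefl)
  ultimately have "continuous_on (simplex_on S) f"
    unfolding f_def by (intro continuous_intros)
  moreover have "f \<in> simplex_on S \<rightarrow> simplex_on S"
  proof
    fix w assume w: "w \<in> simplex_on S"
    have "(\<Sum>i\<in>UNIV. f w $ i) = (\<Sum>k\<in>UNIV. \<phi> k w) / (\<Sum>k\<in>UNIV. \<phi> k w)"
      unfolding f_def vec_lambda_beta by (rule sum_divide_distrib[symmetric])
    also have "\<dots> = 1" using sum_pos[OF w] by simp
    finally show "f w \<in> simplex_on S"
      unfolding simplex_on_def using sum_pos[OF w] by (auto simp: f_def \<phi>_def less_eq_vec_def)
  qed
  ultimately obtain w where w: "w \<in> simplex_on S" "f w = w"
    using brouwer[OF compact_simplex_on convex_simplex_on] axis_in_simplex_on \<open>S \<noteq> {}\<close> by blast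
  obtain i where i: "i \<in> S" "0 \<le> g i w" using uncovered[OF w(1)] by blast
  then have "\<phi> i w = 0" by (simp add: \<phi>_def)
  then have "w $ i = 0" using w(2) by (metis div_0 f_def vec_lambda_beta)
  then show False using facet[OF w(1) i(1)] i(2) by simp
qed

section \<open>Dominated sets\<close>

lemma unit_cube_eq_atLeastAtMost: "unit_cube = {0..1 :: real ^ 'n}"
  by (auto simp: unit_cube_def less_eq_vec_def)

lemma vec_gneq_iff_less: "vec_gneq x y \<longleftrightarrow> y < x"
  by (auto simp: vec_gneq_def less_vec_def less_eq_vec_def not_le)

lemma dominated_set_eq: "dominated_set u a = unit_cube \<inter> u -` {..u a}"
  by (auto simp: dominated_set_def less_eq_vec_def)

lemma public_goods_utility_mono:
  assumes "public_goods_utility u" "x \<in> unit_cube" "y \<in> unit_cube" "y \<le> x" "y $ i = x $ i"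
  shows "u y $ i \<le> u x $ i"
proof (cases "y = x")
  case False
  with \<open>y \<le> x\<close> have "vec_gneq x y" by (simp add: vec_gneq_iff_less)
  then have "u y $ i < u x $ i"
    using assms(1-3,5) unfolding public_goods_utility_def by auto
  then show ?thesis by simp
qed simp

lemma inf_mem_dominated_set:
  assumes "public_goods_utility u" "x \<in> dominated_set u a" "y \<in> dominated_set u a"
  shows "inf x y \<in> dominated_set u a"
proof -
  have "x \<in> unit_cube" "y \<in> unit_cube" using assms(2,3) by (auto simp: dominated_set_def)
  then have cube: "inf x y \<in> unit_cube"
    by (auto simp: unit_cube_eq_atLeastAtMost intro: le_infI1)
  have "u (inf x y) $ i \<le> u a $ i" for i
  proof -
    obtain z where z: "z \<in> {x, y}" "inf x y $ i = z $ i"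
      by (cases "x $ i \<le> y $ i") (auto simp: inf_vec_def inf_min min_def)
    have "z \<in> unit_cube" "inf x y \<le> z" using z(1) \<open>x \<in> unit_cube\<close> \<open>y \<in> unit_cube\<close> by auto
    then have "u (inf x y) $ i \<le> u z $ i"
      using public_goods_utility_mono[OF assms(1) _ cube _ z(2)] by blast
    also have "\<dots> \<le> u a $ i" using z(1) assms(2,3) by (auto simp: dominated_set_def)
    finally show ?thesis .
  qed
  then show ?thesis using cube by (simp add: dominated_set_def)
qed

lemma closed_dominated_set:
  assumes "public_goods_utility u" shows "closed (dominated_set u a)"
  unfolding dominated_set_eq
proof (rule continuous_closed_preimage)
  show "continuous_on unit_cube u" using assms by (simp add: public_goods_utility_def)
qed (simp_all add: unit_cube_eq_atLeastAtMost)

lemma bdd_below_dominated_set: "bdd_below (dominated_set u a)"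
  by (rule bdd_below_mono[OF bdd_below_Icc[of 0 1]]) (auto simp: dominated_set_def unit_cube_eq_atLeastAtMost)

lemma core_no_deviation:
  assumes "a \<in> core u" "C \<noteq> {}" "y \<in> unit_cube" "\<And>i. i \<notin> C \<Longrightarrow> y $ i = 0"
  shows "\<exists>i\<in>C. u y $ i \<le> u a $ i"
proof -
  have "\<not> (\<forall>i\<in>C. u a $ i < u y $ i)"
    using assms unfolding core_def is_deviation_def by blast
  then show ?thesis by (auto simp: not_less)
qed

lemma descend_along_ray:
  fixes x w :: "'a::ordered_euclidean_space"
  assumes "0 < t" "0 \<le> w" "w \<noteq> 0" and ray: "\<And>s. 0 \<le> s \<Longrightarrow> s \<le> t \<Longrightarrow> x - s *\<^sub>R w \<in> T"
  shows "\<exists>z<x. path_component T x z"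
proof (intro exI conjI)
  show "x - t *\<^sub>R w < x"
    using assms(1-3) by (simp add: order.strict_iff_order scaleR_nonneg_nonneg)
  have "closed_segment x (x - t *\<^sub>R w) \<subseteq> T"
  proof
    fix y assume "y \<in> closed_segment x (x - t *\<^sub>R w)"
    then obtain \<theta> where \<theta>: "0 \<le> \<theta>" "\<theta> \<le> 1" "y = (1 - \<theta>) *\<^sub>R x + \<theta> *\<^sub>R (x - t *\<^sub>R w)"
      by (auto simp: closed_segment_def)
    then have "y = x - (\<theta> * t) *\<^sub>R w" by (simp add: algebra_simps)
    moreover have "0 \<le> \<theta> * t" "\<theta> * t \<le> t"
      using \<theta> \<open>0 < t\<close> by (auto simp: mult_left_le_one_le)
    ultimately show "y \<in> T" using ray by simp
  qed
  then show "path_component T x (x - t *\<^sub>R w)" by (rule path_component_linepath)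
qed

lemma descend_from_slack_coordinate:
  assumes utility: "public_goods_utility u" and x: "x \<in> dominated_set u a"
    and "0 < x $ j" "u x $ j < u a $ j"
  shows "\<exists>z<x. path_component (dominated_set u a) x z"
proof -
  have "x \<in> unit_cube" using x by (simp add: dominated_set_def)
  have "continuous_on unit_cube (\<lambda>y. u y $ j)"
    using utility by (intro continuous_intros) (simp add: public_goods_utility_def)
  then obtain \<delta> where "\<delta> > 0"
    and \<delta>: "\<And>y. y \<in> unit_cube \<Longrightarrow> dist y x < \<delta> \<Longrightarrow> dist (u y $ j) (u x $ j) < u a $ j - u x $ j"
    using \<open>x \<in> unit_cube\<close> \<open>u x $ j < u a $ j\<close> unfolding continuous_on_iff by (meson diff_gt_0_iff_gt)
  define t where "t = min (\<delta> / 2) (x $ j)"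
  have "0 < t" using \<open>\<delta> > 0\<close> \<open>0 < x $ j\<close> by (simp add: t_def)
  have ray: "x - s *\<^sub>R axis j 1 \<in> dominated_set u a" if s: "0 \<le> s" "s \<le> t" for s
  proof -
    let ?y = "x - s *\<^sub>R axis j 1"
    have "?y \<le> x" using s by (simp add: less_eq_vec_def axis_def)
    moreover have "0 \<le> ?y" using \<open>x \<in> unit_cube\<close> s
      by (auto simp: less_eq_vec_def axis_def t_def unit_cube_def)
    ultimately have "?y \<in> unit_cube"
      using \<open>x \<in> unit_cube\<close> unfolding unit_cube_eq_atLeastAtMost by (meson atLeastAtMost_iff order.trans)
    have "u ?y $ i \<le> u a $ i" for i
    proof (cases "i = j")
      case True
      have "dist ?y x < \<delta>" using s \<open>\<delta> > 0\<close> by (simp add: dist_norm t_def)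
      then show ?thesis using \<delta>[OF \<open>?y \<in> unit_cube\<close>] True by (simp add: dist_real_def)
    next
      case False
      then have "u ?y $ i \<le> u x $ i"
        using \<open>?y \<le> x\<close> by (intro public_goods_utility_mono[OF utility \<open>x \<in> unit_cube\<close> \<open>?y \<in> unit_cube\<close>])
          (simp_all add: axis_def)
      then show ?thesis using x unfolding dominated_set_def by (blast intro: order_trans)
    qed
    then show ?thesis using \<open>?y \<in> unit_cube\<close> by (simp add: dominated_set_def)
  qed
  show ?thesis
  proof (rule descend_along_ray[OF \<open>0 < t\<close> _ _ ray])
    show "0 \<le> axis j (1::real)" by (simp add: less_eq_vec_def axis_def)
  qed simp
qed

lemma ray_in_unit_cube:
  assumes "x \<in> unit_cube" "w \<in> simplex_on S" "\<And>j. j \<in> S \<Longrightarrow> t0 \<le> x $ j" "0 \<le> t" "t \<le> t0"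
  shows "x - t *\<^sub>R w \<in> unit_cube"
  unfolding unit_cube_def
proof (intro CollectI allI)
  fix i
  have w: "0 \<le> w $ i" "w $ i \<le> 1" "i \<notin> S \<Longrightarrow> w $ i = 0"
    using assms(2) simplex_on_nth_le_1 by (auto simp: simplex_on_def less_eq_vec_def)
  have "t * w $ i \<le> t" using w assms(4) by (simp add: mult_right_le_one_le)
  moreover have "0 \<le> t * w $ i" using w assms(4) by simp
  moreover have "0 \<le> x $ i" "x $ i \<le> 1" using assms(1) by (auto simp: unit_cube_def)
  ultimately show "0 \<le> (x - t *\<^sub>R w) $ i \<and> (x - t *\<^sub>R w) $ i \<le> 1"
    using assms(3)[of i] assms(5) w(3) by (cases "i \<in> S") auto
qed

lemma concave_on_less_extrapolate:
  fixes f :: "'a::real_vector \<Rightarrow> real"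
  assumes "concave_on C f" "x \<in> C" "y \<in> C" "c \<le> f x" "0 < \<theta>" "\<theta> \<le> 1"
    and "f ((1 - \<theta>) *\<^sub>R x + \<theta> *\<^sub>R y) < c + \<theta> * d"
  shows "f y < c + d"
proof -
  have "(1 - \<theta>) * c + \<theta> * f y \<le> (1 - \<theta>) * f x + \<theta> * f y"
    using assms(4,6) by (simp add: mult_left_mono)
  also have "\<dots> \<le> f ((1 - \<theta>) *\<^sub>R x + \<theta> *\<^sub>R y)"
    using assms(1-3,5,6) by (intro concave_onD) auto
  finally have "\<theta> * f y < \<theta> * (c + d)"
    using assms(7) by (simp add: algebra_simps)
  then show ?thesis using \<open>0 < \<theta>\<close> by simp
qed

text \<open>The tight case of the descent step: every agent contributing to \<open>x\<close> is exactly as well off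
  as at \<open>a\<close>.\<close>

locale tight_outcome =
  fixes u :: "real ^ 'n \<Rightarrow> real ^ 'n" and a x :: "real ^ 'n" and S :: "'n set" and t0 :: real
  assumes utility: "public_goods_utility u" and core: "a \<in> core u"
    and x_dominated: "x \<in> dominated_set u a"
    and support: "\<And>i. i \<notin> S \<Longrightarrow> x $ i = 0" and S_nonempty: "S \<noteq> {}"
    and t0_pos: "0 < t0" and t0_le: "\<And>j. j \<in> S \<Longrightarrow> t0 \<le> x $ j"
    and tight: "\<And>j. j \<in> S \<Longrightarrow> u x $ j = u a $ j"
begin

lemma x_in_unit_cube: "x \<in> unit_cube"
  using x_dominated by (simp add: dominated_set_def)

lemma ray_mem_unit_cube: "w \<in> simplex_on S \<Longrightarrow> 0 \<le> t \<Longrightarrow> t \<le> t0 \<Longrightarrow> x - t *\<^sub>R w \<in> unit_cube"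
  by (rule ray_in_unit_cube[OF x_in_unit_cube _ t0_le])

lemma ray_le: "w \<in> simplex_on S \<Longrightarrow> 0 \<le> t \<Longrightarrow> x - t *\<^sub>R w \<le> x"
  by (simp add: simplex_on_def scaleR_nonneg_nonneg)

lemma ray_utility_le:
  assumes "w \<in> simplex_on S" "0 \<le> t" "t \<le> t0" "w $ i = 0"
  shows "u (x - t *\<^sub>R w) $ i \<le> u a $ i"
proof -
  have "u (x - t *\<^sub>R w) $ i \<le> u x $ i"
    using assms by (intro public_goods_utility_mono[OF utility x_in_unit_cube ray_mem_unit_cube ray_le]) auto
  also have "\<dots> \<le> u a $ i" using x_dominated by (simp add: dominated_set_def)
  finally show ?thesis .
qed

lemma continuous_on_ray:
  assumes "0 \<le> t" "t \<le> t0"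
  shows "continuous_on (simplex_on S) (\<lambda>w. u (x - t *\<^sub>R w) $ i)"
proof -
  have "continuous_on unit_cube u" using utility by (simp add: public_goods_utility_def)
  moreover have "(\<lambda>w. x - t *\<^sub>R w) ` simplex_on S \<subseteq> unit_cube"
    using ray_mem_unit_cube assms by blast
  ultimately have "continuous_on (simplex_on S) (u \<circ> (\<lambda>w. x - t *\<^sub>R w))"
    by (intro continuous_on_compose continuous_intros) (rule continuous_on_subset)
  then show ?thesis by (intro continuous_on_component) (simp add: comp_def)
qed

text \<open>Since \<open>S\<close> cannot block \<open>a\<close>, at every point of the simplex some member of \<open>S\<close> gains less
  than \<open>\<epsilon>\<close>; the KKM-type lemma turns these pointwise witnesses into one direction that works for
  all of \<open>S\<close> at once.\<close>
lemma ray_nearly_dominated: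
  assumes "0 < t" "t \<le> t0" "0 < \<epsilon>"
  shows "\<exists>w\<in>simplex_on S. \<forall>i\<in>S. u (x - t *\<^sub>R w) $ i < u a $ i + \<epsilon>"
proof -
  have "\<exists>w\<in>simplex_on S. \<forall>i\<in>S. u (x - t *\<^sub>R w) $ i - (u a $ i + \<epsilon>) < 0"
  proof (rule simplex_on_open_cover_common_point[OF S_nonempty])
    show "continuous_on (simplex_on S) (\<lambda>w. u (x - t *\<^sub>R w) $ i - (u a $ i + \<epsilon>))" for i
      using assms by (intro continuous_on_diff continuous_on_const continuous_on_ray) auto
    show "u (x - t *\<^sub>R w) $ i - (u a $ i + \<epsilon>) < 0" if "w \<in> simplex_on S" "w $ i = 0" for w i
      using ray_utility_le[OF that(1) less_imp_le[OF \<open>0 < t\<close>] \<open>t \<le> t0\<close> that(2)] \<open>0 < \<epsilon>\<close>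
      by linarith
    show "\<exists>i\<in>S. u (x - t *\<^sub>R w) $ i - (u a $ i + \<epsilon>) < 0" if "w \<in> simplex_on S" for w
    proof -
      have "x - t *\<^sub>R w \<in> unit_cube"
        using that assms by (intro ray_mem_unit_cube) auto
      moreover have "(x - t *\<^sub>R w) $ i = 0" if "i \<notin> S" for i
        using \<open>w \<in> simplex_on S\<close> support[OF that] that by (simp add: simplex_on_def)
      ultimately obtain i where "i \<in> S" "u (x - t *\<^sub>R w) $ i \<le> u a $ i"
        using core_no_deviation[OF core S_nonempty] by blast
      then show ?thesis using \<open>0 < \<epsilon>\<close> by (intro bexI[of _ i]) auto
    qed
  qed
  then show ?thesis by simp
qed

lemma ray_extrapolate:
  assumes "w \<in> simplex_on S" "i \<in> S" "0 < t" "t \<le> s" "s \<le> t0"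
    and "u (x - t *\<^sub>R w) $ i < u a $ i + t * \<delta>"
  shows "u (x - s *\<^sub>R w) $ i < u a $ i + s * \<delta>"
proof (rule concave_on_less_extrapolate[where f = "\<lambda>y. u y $ i" and C = unit_cube and x = x and \<theta> = "t / s"])
  show "concave_on unit_cube (\<lambda>y. u y $ i)" using utility by (simp add: public_goods_utility_def)
  show "x \<in> unit_cube" by (rule x_in_unit_cube)
  show "x - s *\<^sub>R w \<in> unit_cube"
    using assms by (intro ray_mem_unit_cube) auto
  show "u a $ i \<le> u x $ i" using tight[OF \<open>i \<in> S\<close>] by simp
  show "0 < t / s" "t / s \<le> 1" using assms(3,4) by auto
  have "(1 - t / s) *\<^sub>R x + (t / s) *\<^sub>R (x - s *\<^sub>R w) = x - (t / s * s) *\<^sub>R w"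
    by (simp add: algebra_simps)
  also have "t / s * s = t" using assms(3,4) by simp
  finally have comb: "(1 - t / s) *\<^sub>R x + (t / s) *\<^sub>R (x - s *\<^sub>R w) = x - t *\<^sub>R w" .
  show "u ((1 - t / s) *\<^sub>R x + (t / s) *\<^sub>R (x - s *\<^sub>R w)) $ i < u a $ i + t / s * (s * \<delta>)"
    unfolding comb using assms(3,4,6) by simp
qed


lemma ray_utility_limit_le:
  assumes "\<And>n. w n \<in> simplex_on S" "w \<longlonglongrightarrow> l" "l \<in> simplex_on S" "0 \<le> s" "s \<le> t0"
    and "\<forall>\<^sub>F n in sequentially. u (x - s *\<^sub>R w n) $ i \<le> u a $ i + e n" "e \<longlonglongrightarrow> 0"
  shows "u (x - s *\<^sub>R l) $ i \<le> u a $ i"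
proof -
  have "(\<lambda>n. u (x - s *\<^sub>R w n) $ i) \<longlonglongrightarrow> u (x - s *\<^sub>R l) $ i"
    using continuous_on_ray[OF assms(4,5)] assms(1)
    by (intro continuous_on_tendsto_compose[OF _ assms(2,3)]) auto
  moreover have "(\<lambda>n. u a $ i + e n) \<longlonglongrightarrow> u a $ i + 0"
    using assms(7) by (intro tendsto_intros)
  ultimately have "u (x - s *\<^sub>R l) $ i \<le> u a $ i + 0"
    using assms(6) by (intro tendsto_le[OF trivial_limit_sequentially]) auto
  then show ?thesis by simp
qed

text \<open>Concavity (\<open>ray_extrapolate\<close>) upgrades the approximate bounds obtained at the short lengths
  \<open>t k\<close> to every length up to \<open>t0\<close>; a limit direction of the chosen \<open>W k\<close> then satisfies them exactly.\<close>

lemma dominated_ray: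
  obtains l where "l \<in> simplex_on S" "\<And>s. 0 \<le> s \<Longrightarrow> s \<le> t0 \<Longrightarrow> x - s *\<^sub>R l \<in> dominated_set u a"
proof -
  define t where "t k = t0 / real (Suc k)" for k
  have t: "0 < t k" "t k \<le> t0" for k
    using t0_pos by (auto simp: t_def divide_le_eq)
  have "\<forall>k. \<exists>w\<in>simplex_on S. \<forall>i\<in>S. u (x - t k *\<^sub>R w) $ i < u a $ i + t k * inverse (real (Suc k))"
    using ray_nearly_dominated t by simp
  then obtain W where W: "\<And>k. W k \<in> simplex_on S"
    "\<And>k i. i \<in> S \<Longrightarrow> u (x - t k *\<^sub>R W k) $ i < u a $ i + t k * inverse (real (Suc k))"
    by metis
  obtain l r where l: "l \<in> simplex_on S" "strict_mono r" "(W \<circ> r) \<longlonglongrightarrow> l"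
    using compact_simplex_on[unfolded compact_eq_seq_compact_metric seq_compact_def] W(1) by metis
  have S_bound: "u (x - s *\<^sub>R l) $ i \<le> u a $ i" if s: "0 < s" "s \<le> t0" and "i \<in> S" for s i
  proof -
    obtain N where N: "t0 / s < real N" using reals_Archimedean2 by blast
    have "u (x - s *\<^sub>R W (r n)) $ i < u a $ i + s * inverse (real (Suc (r n)))" if "N \<le> n" for n
    proof (rule ray_extrapolate[OF W(1) \<open>i \<in> S\<close> t(1) _ s(2) W(2)[OF \<open>i \<in> S\<close>]])
      have "real N \<le> real (Suc (r n))" using \<open>N \<le> n\<close> seq_suble[OF l(2), of n] by simp
      then have "s * real N \<le> s * real (Suc (r n))" using s(1) by simp
      moreover have "t0 < s * real N" using N s(1) by (simp add: divide_less_eq mult.commute)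
      ultimately have "t0 < s * real (Suc (r n))" by linarith
      then show "t (r n) \<le> s" by (simp add: t_def divide_le_eq mult.commute)
    qed
    then have ev: "\<forall>\<^sub>F n in sequentially.
        u (x - s *\<^sub>R (W \<circ> r) n) $ i \<le> u a $ i + s * inverse (real (Suc (r n)))"
      by (auto simp: eventually_sequentially intro!: exI[of _ N] less_imp_le)
    have "(\<lambda>n. s * inverse (real (Suc (r n)))) \<longlonglongrightarrow> 0"
      using LIMSEQ_subseq_LIMSEQ[OF LIMSEQ_inverse_real_of_nat l(2)]
      by (intro tendsto_mult_right_zero) (simp add: comp_def)
    then show ?thesis
      using W(1) s by (intro ray_utility_limit_le[OF _ l(3) l(1) _ s(2) ev]) auto
  qed
  show thesis
  proof (rule that[OF l(1)])
    fix s assume s: "0 \<le> s" "s \<le> t0"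
    have "u (x - s *\<^sub>R l) $ i \<le> u a $ i" for i
    proof (cases "s = 0 \<or> i \<notin> S")
      case True
      then show ?thesis
        using x_dominated ray_utility_le[OF l(1) s] l(1) by (auto simp: dominated_set_def simplex_on_def)
    next
      case False
      then show ?thesis using S_bound s by simp
    qed
    then show "x - s *\<^sub>R l \<in> dominated_set u a"
      using ray_mem_unit_cube[OF l(1) s] by (simp add: dominated_set_def)
  qed
qed

lemma descend: "\<exists>z<x. path_component (dominated_set u a) x z"
proof -
  obtain l where l: "l \<in> simplex_on S" and ray: "\<And>s. 0 \<le> s \<Longrightarrow> s \<le> t0 \<Longrightarrow> x - s *\<^sub>R l \<in> dominated_set u a"
    using dominated_ray by blast
  show ?thesis
    by (rule descend_along_ray[OF t0_pos _ simplex_on_nonzero[OF l] ray]) (use l in \<open>simp add: simplex_on_def\<close>)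
qed

end

lemma descend_in_dominated_set:
  assumes utility: "public_goods_utility u" and core: "a \<in> core u"
    and x: "x \<in> dominated_set u a" "x \<noteq> 0"
  shows "\<exists>z<x. path_component (dominated_set u a) x z"
proof -
  define S where "S = {j. 0 < x $ j}"
  have support: "x $ i = 0" if "i \<notin> S" for i
    using x(1) that by (auto simp: S_def dominated_set_def unit_cube_def intro: order.antisym)
  have "S \<noteq> {}"
  proof
    assume "S = {}"
    then have "x = 0" using support by (simp add: vec_eq_iff)
    with \<open>x \<noteq> 0\<close> show False ..
  qed
  show ?thesis
  proof (cases "\<exists>j\<in>S. u x $ j < u a $ j")
    case True
    then show ?thesis
      using descend_from_slack_coordinate[OF utility x(1)] by (auto simp: S_def)
  next
    case False
    define t0 where "t0 = Min ((\<lambda>j. x $ j) ` S)"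
    interpret tight_outcome u a x S t0
    proof
      show "0 < t0" using \<open>S \<noteq> {}\<close> by (auto simp: t0_def S_def)
      show "t0 \<le> x $ j" if "j \<in> S" for j using that by (simp add: t0_def)
      show "u x $ j = u a $ j" if "j \<in> S" for j
      proof -
        have "u x $ j \<le> u a $ j" using x(1) by (simp add: dominated_set_def)
        moreover have "\<not> u x $ j < u a $ j" using False that by blast
        ultimately show ?thesis by simp
      qed
    qed (use utility core x(1) support \<open>S \<noteq> {}\<close> in auto)
    show ?thesis by (rule descend)
  qed
qed

theorem lemma13:
  fixes u :: "real ^ 'n \<Rightarrow> real ^ 'n" and a :: "real ^ 'n"
  assumes "public_goods_utility u"
    and "a \<in> core u"
  shows "path_connected (dominated_set u a)"
  using closed_dominated_set[OF assms(1)] bdd_below_dominated_set inf_mem_dominated_set[OF assms(1)]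
    descend_in_dominated_set[OF assms]
  by (rule path_connected_inf_closed_descending)

end
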